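(* Let $T$ be a tree of order $n$ with exactly $n_2$ vertices of degree $2$. Then $$b(T)\le \left\lceil \left(n+n_2-\left\lceil\sqrt{n+n_2+0.25}-1.5\right\rceil\right)^{1/2}\right\rceil.$$
   Context: All graphs are finite and simple. Burning process of a connected graph $G$: initially all vertices are unburned. In each round $r\ge 1$, one vertex $x_r$ that is unburned at the end of round $r-1$ is chosen as the source of round $r$; in round $r$ the source $x_r$ becomes burned, and so does every vertex that was unburned at the end of round $r-1$ and is adjacent to a vertex burned at the end of round $r-1$. Burned vertices stay burned. If all vertices are burned at the end of round $k$ (and not earlier), $(x_1,\dots,x_k)$ is called a burning sequence for $G$ of length $k$. The burning number $b(G)$ is the minimum length of a burning sequence for $G$. *)

theory Defs
  imports Complex_Main
begin

definition simple_graph :: "'a set \<Rightarrow> ('a \<Rightarrow> 'a \<Rightarrow> bool) \<Rightarrow> bool" where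
  "simple_graph V E \<longleftrightarrow> finite V \<and> (\<forall>u v. E u v \<longrightarrow> u \<in> V \<and> v \<in> V)
     \<and> (\<forall>u v. E u v \<longrightarrow> E v u) \<and> (\<forall>v. \<not> E v v)"

definition connected_graph :: "'a set \<Rightarrow> ('a \<Rightarrow> 'a \<Rightarrow> bool) \<Rightarrow> bool" where
  "connected_graph V E \<longleftrightarrow> V \<noteq> {} \<and> (\<forall>u\<in>V. \<forall>v\<in>V. E\<^sup>*\<^sup>* u v)"

definition is_cycle :: "('a \<Rightarrow> 'a \<Rightarrow> bool) \<Rightarrow> 'a list \<Rightarrow> bool" where
  "is_cycle E cs \<longleftrightarrow> length cs \<ge> 3 \<and> distinct cs
     \<and> (\<forall>i. Suc i < length cs \<longrightarrow> E (cs ! i) (cs ! Suc i)) \<and> E (last cs) (hd cs)"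

definition tree :: "'a set \<Rightarrow> ('a \<Rightarrow> 'a \<Rightarrow> bool) \<Rightarrow> bool" where
  "tree V E \<longleftrightarrow> simple_graph V E \<and> connected_graph V E \<and> \<not> (\<exists>cs. is_cycle E cs)"

definition degree :: "'a set \<Rightarrow> ('a \<Rightarrow> 'a \<Rightarrow> bool) \<Rightarrow> 'a \<Rightarrow> nat" where
  "degree V E v = card {u \<in> V. E v u}"

fun burned :: "('a \<Rightarrow> 'a \<Rightarrow> bool) \<Rightarrow> 'a list \<Rightarrow> nat \<Rightarrow> 'a set" where
  "burned E xs 0 = {}"
| "burned E xs (Suc r) = burned E xs r \<union> {xs ! r} \<union> {v. \<exists>u \<in> burned E xs r. E u v}"

definition burning_sequence :: "'a set \<Rightarrow> ('a \<Rightarrow> 'a \<Rightarrow> bool) \<Rightarrow> 'a list \<Rightarrow> bool" where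
  "burning_sequence V E xs \<longleftrightarrow>
     (\<forall>r < length xs. xs ! r \<in> V \<and> xs ! r \<notin> burned E xs r)
     \<and> burned E xs (length xs) = V
     \<and> (\<forall>r < length xs. burned E xs r \<noteq> V)"

definition burning_number :: "'a set \<Rightarrow> ('a \<Rightarrow> 'a \<Rightarrow> bool) \<Rightarrow> nat" where
  "burning_number V E = (LEAST k. \<exists>xs. burning_sequence V E xs \<and> length xs = k)"

end

(* Let K be the right-hand side. A greedy procedure with radii K - 1, ..., 1, 0 takes an
   uncovered vertex l farthest from a fixed root and covers everything within distance 2R
   of l by the ball of radius R around the vertex R steps from l towards the root; this
   works by the four-point condition of the tree metric. Either K balls cover the tree, and
   lighting their centres in order burns it within K rounds, or the procedure produces K + 1
   vertices l_0, ..., l_K with dist l_i l_j > 2 (K - 1 - i) for i < j. In the latter case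
   the geodesic from l_i (i <= K - 2) to its nearest later point contains K - i internal
   vertices that are far from all later points, hence distinct for different i. So there
   are at least K (K + 1) / 2 - 1 internal vertices, and as n + n_2 >= 2 + 2 (n_2 + n_3 + ...)
   by counting leaves, n + n_2 >= K^2 + K, which the choice of K rules out. *)
theory Submission
  imports Defs "HOL-Library.Transitive_Closure_Table"
begin

section \<open>Burning with prescribed sources\<close>

lemma burned_mono: "t \<le> t' \<Longrightarrow> burned E xs t \<subseteq> burned E xs t'"
  by (rule lift_Suc_mono_le[of "burned E xs"]) auto

lemma burned_append: "t \<le> length xs \<Longrightarrow> burned E (xs @ ys) t = burned E xs t"
  by (induction t) (auto simp: nth_append)

lemma burned_relpowp: "c \<in> burned E xs s \<Longrightarrow> (E ^^ n) c v \<Longrightarrow> v \<in> burned E xs (s + n)"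
proof (induction n arbitrary: v)
  case (Suc n)
  then obtain y where "(E ^^ n) c y" "E y v" by (auto elim: relpowp_Suc_E)
  then show ?case using Suc.IH[OF Suc.prems(1)] by auto
qed simp

lemma burned_subset:
  assumes "\<And>u v. E u v \<Longrightarrow> v \<in> V" and "\<forall>r<t. xs ! r \<in> V"
  shows "burned E xs t \<subseteq> V"
  using assms(2) by (induction t) (auto dest: assms(1))

lemma burned_mono_sources:
  "\<forall>r<t. xs ! r \<in> burned E ys (Suc r) \<Longrightarrow> burned E xs t \<subseteq> burned E ys t"
proof (induction t)
  case (Suc t)
  then have "burned E xs t \<subseteq> burned E ys t" "xs ! t \<in> burned E ys (Suc t)" by auto
  then show ?case by auto
qed simp

definition tracking_sources :: "'a set \<Rightarrow> ('a \<Rightarrow> 'a \<Rightarrow> bool) \<Rightarrow> 'a list \<Rightarrow> 'a list \<Rightarrow> bool" where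
  "tracking_sources V E cs bs \<longleftrightarrow> (\<forall>r<length bs. bs ! r \<in> V \<and> bs ! r \<notin> burned E bs r)
     \<and> (\<forall>i<length bs. i < length cs \<longrightarrow> cs ! i \<in> burned E bs (Suc i))"

lemma tracking_sources_snoc:
  assumes edges: "\<And>u v. E u v \<Longrightarrow> v \<in> V" and cs: "set cs \<subseteq> V"
    and tr: "tracking_sources V E cs bs" and unfinished: "burned E bs (length bs) \<noteq> V"
  obtains c where "tracking_sources V E cs (bs @ [c])"
proof -
  have "burned E bs (length bs) \<subseteq> V"
    using burned_subset[of E V] edges tr unfolding tracking_sources_def by blast
  then obtain u where u: "u \<in> V" "u \<notin> burned E bs (length bs)" using unfinished by blast
  define c where "c = (if length bs < length cs \<and> cs ! length bs \<notin> burned E bs (length bs)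
    then cs ! length bs else u)"
  have c: "c \<in> V" "c \<notin> burned E bs (length bs)" using cs u by (auto simp: c_def)
  have prefix: "burned E (bs @ [c]) t = burned E bs t" if "t \<le> length bs" for t
    using that by (rule burned_append)
  have "(bs @ [c]) ! r \<in> V \<and> (bs @ [c]) ! r \<notin> burned E (bs @ [c]) r" if "r < Suc (length bs)" for r
  proof (cases "r < length bs")
    case True
    then show ?thesis using tr prefix[of r] unfolding tracking_sources_def by (simp add: nth_append)
  next
    case False
    then have "r = length bs" using that by simp
    then show ?thesis using c prefix[of r] by simp
  qed
  moreover have "cs ! i \<in> burned E (bs @ [c]) (Suc i)" if "i < Suc (length bs)" "i < length cs" for i
  proof (cases "i < length bs")
    case True
    then show ?thesis using tr prefix[of "Suc i"] that unfolding tracking_sources_def by simp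
  next
    case False
    then have i: "i = length bs" using that by simp
    show ?thesis
    proof (cases "cs ! i \<in> burned E bs i")
      case True
      then show ?thesis using prefix[of i] i by simp
    next
      case False
      then have "c = cs ! i" using that i by (simp add: c_def)
      then show ?thesis using i by simp
    qed
  qed
  ultimately have "tracking_sources V E cs (bs @ [c])" unfolding tracking_sources_def by simp
  then show ?thesis by (rule that)
qed

lemma tracking_sources_exists:
  assumes edges: "\<And>u v. E u v \<Longrightarrow> v \<in> V" and cs: "set cs \<subseteq> V"
  obtains bs where "length bs \<le> m" "tracking_sources V E cs bs"
    "length bs < m \<longrightarrow> burned E bs (length bs) = V"
proof (induction m arbitrary: thesis)
  case 0
  show ?case by (rule 0[of "[]"]) (auto simp: tracking_sources_def)
next
  case (Suc m)
  obtain bs where len: "length bs \<le> m" and tr: "tracking_sources V E cs bs"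
    and full: "length bs < m \<longrightarrow> burned E bs (length bs) = V"
    by (rule Suc.IH)
  show ?case
  proof (cases "burned E bs (length bs) = V")
    case True
    show ?thesis by (rule Suc.prems[of bs]) (use len tr True in auto)
  next
    case False
    then have m: "length bs = m" using len full by linarith
    obtain c where "tracking_sources V E cs (bs @ [c])"
      using tracking_sources_snoc[OF edges cs tr False] .
    then show ?thesis by (rule Suc.prems[of "bs @ [c]", rotated]) (use m in auto)
  qed
qed

lemma burning_number_le:
  assumes edges: "\<And>u v. E u v \<Longrightarrow> v \<in> V" and cs: "set cs \<subseteq> V"
    and covered: "V \<subseteq> burned E cs (length cs)"
  shows "burning_number V E \<le> length cs"
proof -
  obtain bs where len: "length bs \<le> length cs" and tr: "tracking_sources V E cs bs"
    and full: "length bs < length cs \<longrightarrow> burned E bs (length bs) = V"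
    by (rule tracking_sources_exists[OF edges cs])
  have valid: "\<forall>r<length bs. bs ! r \<in> V \<and> bs ! r \<notin> burned E bs r"
    and tracks: "\<forall>i<length bs. i < length cs \<longrightarrow> cs ! i \<in> burned E bs (Suc i)"
    using tr unfolding tracking_sources_def by blast+
  then have "burned E bs (length bs) \<subseteq> V" using burned_subset[of E V] edges by blast
  have "burned E bs (length bs) = V"
  proof (cases "length bs < length cs")
    case False
    then have eq: "length bs = length cs" using len by simp
    then have "\<forall>r<length cs. cs ! r \<in> burned E bs (Suc r)" using tracks by simp
    then have "burned E cs (length cs) \<subseteq> burned E bs (length bs)"
      unfolding eq by (rule burned_mono_sources)
    then show ?thesis using covered \<open>burned E bs (length bs) \<subseteq> V\<close> by blast
  qed (use full in blast)
  then have "burning_sequence V E bs"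
    unfolding burning_sequence_def using valid by auto
  then have "burning_number V E \<le> length bs"
    unfolding burning_number_def by (intro Least_le) blast
  then show ?thesis using len by simp
qed

section \<open>The metric of a tree\<close>

locale tree_graph =
  fixes V :: "'a set" and E :: "'a \<Rightarrow> 'a \<Rightarrow> bool"
  assumes tree: "tree V E"
begin

lemma finite_vertices: "finite V"
  using tree unfolding tree_def simple_graph_def by auto

lemma edge_vertices: "E u v \<Longrightarrow> u \<in> V \<and> v \<in> V"
  using tree unfolding tree_def simple_graph_def by auto

lemma edge_sym: "E u v \<Longrightarrow> E v u"
  using tree unfolding tree_def simple_graph_def by auto

lemma edge_irrefl: "\<not> E v v"
  using tree unfolding tree_def simple_graph_def by auto

lemma connected: "u \<in> V \<Longrightarrow> v \<in> V \<Longrightarrow> E\<^sup>*\<^sup>* u v"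
  using tree unfolding tree_def connected_graph_def by auto

lemma vertices_nonempty: "V \<noteq> {}"
  using tree unfolding tree_def connected_graph_def by auto

lemma no_cycle: "\<not> is_cycle E cs"
  using tree unfolding tree_def by auto

lemma relpowp_sym: "(E ^^ n) u v \<Longrightarrow> (E ^^ n) v u"
proof (induction n arbitrary: v)
  case (Suc n)
  then obtain y where "(E ^^ n) u y" "E y v" by (auto elim: relpowp_Suc_E)
  then show ?case using Suc.IH edge_sym by (meson relpowp_Suc_I2)
qed simp

lemma relpowp_vertices: "(E ^^ n) u v \<Longrightarrow> 0 < n \<Longrightarrow> u \<in> V \<and> v \<in> V"
proof (induction n arbitrary: v)
  case (Suc n)
  then obtain y where "(E ^^ n) u y" "E y v" by (auto elim: relpowp_Suc_E)
  then show ?case using Suc.IH edge_vertices by (cases n) auto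
qed simp

definition dist :: "'a \<Rightarrow> 'a \<Rightarrow> nat" where
  "dist u v = (LEAST n. (E ^^ n) u v)"

lemma dist_relpowp: "u \<in> V \<Longrightarrow> v \<in> V \<Longrightarrow> (E ^^ dist u v) u v"
  unfolding dist_def using connected rtranclp_imp_relpowp by (metis LeastI_ex)

lemma dist_le_relpowp: "(E ^^ n) u v \<Longrightarrow> dist u v \<le> n"
  unfolding dist_def by (rule Least_le)

lemma dist_commute: "dist u v = dist v u"
  unfolding dist_def using relpowp_sym by metis

lemma dist_self [simp]: "dist u u = 0"
  using dist_le_relpowp[of 0 u u] by simp

lemma dist_eq_0_iff: "u \<in> V \<Longrightarrow> v \<in> V \<Longrightarrow> dist u v = 0 \<longleftrightarrow> u = v"
  using dist_relpowp[of u v] by auto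

lemma dist_triangle: "u \<in> V \<Longrightarrow> v \<in> V \<Longrightarrow> w \<in> V \<Longrightarrow> dist u w \<le> dist u v + dist v w"
  using dist_relpowp[of u v] dist_relpowp[of v w] relpowp_trans dist_le_relpowp by metis

lemma dist_edge: "E u v \<Longrightarrow> dist u v = 1"
proof -
  assume uv: "E u v"
  then have "(E ^^ 1) u v" by (simp only: relpowp_1)
  then have "dist u v \<le> 1" by (rule dist_le_relpowp)
  moreover have "u \<noteq> v" using uv edge_irrefl by auto
  ultimately show ?thesis using dist_eq_0_iff edge_vertices[OF uv] by fastforce
qed

lemma dist_split:
  assumes u: "u \<in> V" and v: "v \<in> V" and s: "s \<le> dist u v"
  obtains y where "y \<in> V" "dist u y = s" "dist y v = dist u v - s"
proof -
  have "(E ^^ (s + (dist u v - s))) u v" using dist_relpowp[OF u v] s by simp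
  then obtain y where uy: "(E ^^ s) u y" and yv: "(E ^^ (dist u v - s)) y v"
    by (auto simp: relpowp_add)
  have y: "y \<in> V" using u uy relpowp_vertices[OF uy] by (cases s) auto
  have "dist u v \<le> dist u y + dist y v" using dist_triangle[OF u y v] .
  then show ?thesis
    using that[OF y] dist_le_relpowp[OF uy] dist_le_relpowp[OF yv] s by simp
qed

lemma exists_edge_towards:
  assumes u: "u \<in> V" and v: "v \<in> V" and "0 < dist u v"
  obtains y where "E u y" "dist y v = dist u v - 1"
proof -
  obtain y where y: "y \<in> V" "dist u y = 1" "dist y v = dist u v - 1"
    using dist_split[OF u v, of 1] assms(3) by auto
  have "(E ^^ 1) u y" using dist_relpowp[OF u y(1)] y(2) by simp
  then show ?thesis using that y(3) by auto
qed

definition edge_avoiding :: "'a \<Rightarrow> 'a \<Rightarrow> 'a \<Rightarrow> bool" where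
  "edge_avoiding w a b \<longleftrightarrow> E a b \<and> a \<noteq> w \<and> b \<noteq> w"

lemma symp_edge_avoiding: "symp (edge_avoiding w)"
  by (auto intro: sympI simp: edge_avoiding_def edge_sym)

lemma neighbours_disconnected_avoiding:
  assumes wa: "E w a" and wb: "E w b" and ab: "a \<noteq> b"
  shows "\<not> (edge_avoiding w)\<^sup>*\<^sup>* a b"
proof
  assume "(edge_avoiding w)\<^sup>*\<^sup>* a b"
  then obtain xs where "rtrancl_path (edge_avoiding w) a xs b"
    using rtranclp_eq_rtrancl_path by metis
  then obtain xs where path: "rtrancl_path (edge_avoiding w) a xs b" and dist: "distinct (a # xs)"
    using rtrancl_path_distinct by metis
  have xs: "xs \<noteq> []" using path ab by (auto elim: rtrancl_path.cases)
  have "w \<notin> set xs"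
  proof
    assume "w \<in> set xs"
    then have "Rangep (edge_avoiding w) w" by (rule rtrancl_path_Range[OF path])
    then show False by (auto simp: edge_avoiding_def)
  qed
  moreover have "w \<noteq> a" using wa edge_irrefl by auto
  ultimately have distinct: "distinct (w # a # xs)" using dist by simp
  have "is_cycle E (w # a # xs)"
    unfolding is_cycle_def
  proof (intro conjI allI impI)
    show "3 \<le> length (w # a # xs)" using xs by (cases xs) auto
    show "distinct (w # a # xs)" by (fact distinct)
    show "E (last (w # a # xs)) (hd (w # a # xs))"
      using rtrancl_path_last[OF path xs] wb edge_sym xs by simp
    fix i assume i: "Suc i < length (w # a # xs)"
    show "E ((w # a # xs) ! i) ((w # a # xs) ! Suc i)"
    proof (cases i)
      case 0
      then show ?thesis using wa by simp
    next
      case (Suc j)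
      then have "edge_avoiding w ((a # xs) ! j) (xs ! j)"
        using rtrancl_path_nth[OF path] i by simp
      then show ?thesis using Suc unfolding edge_avoiding_def by simp
    qed
  qed
  then show False using no_cycle by simp
qed

lemma rtranclp_edge_avoiding_sym: "(edge_avoiding w)\<^sup>*\<^sup>* a b \<Longrightarrow> (edge_avoiding w)\<^sup>*\<^sup>* b a"
  by (rule sympD[OF symp_rtranclp[OF symp_edge_avoiding]])

lemma avoiding_walk_to_closer:
  assumes w: "w \<in> V" and v: "v \<in> V"
  shows "a \<in> V \<Longrightarrow> dist a v < dist w v \<Longrightarrow> (edge_avoiding w)\<^sup>*\<^sup>* a v"
proof (induction "dist a v" arbitrary: a)
  case 0
  then show ?case using dist_eq_0_iff v by simp
next
  case (Suc m)
  obtain y where ay: "E a y" and y: "dist y v = dist a v - 1"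
    using exists_edge_towards[OF Suc.prems(1) v] Suc.hyps(2) by (metis zero_less_Suc)
  have "edge_avoiding w a y" using ay y Suc unfolding edge_avoiding_def by auto
  moreover have "(edge_avoiding w)\<^sup>*\<^sup>* y v" using Suc.hyps(1)[of y] ay y Suc edge_vertices by simp
  ultimately show ?case by (rule converse_rtranclp_into_rtranclp)
qed

lemma closer_neighbour_unique:
  assumes w: "w \<in> V" and v: "v \<in> V" and wa: "E w a" and wb: "E w b"
    and "dist a v < dist w v" and "dist b v < dist w v"
  shows "a = b"
proof (rule ccontr)
  assume ab: "a \<noteq> b"
  have "(edge_avoiding w)\<^sup>*\<^sup>* a v" "(edge_avoiding w)\<^sup>*\<^sup>* b v"
    using avoiding_walk_to_closer[OF w v] assms edge_vertices by auto
  then have "(edge_avoiding w)\<^sup>*\<^sup>* a b" by (meson rtranclp_edge_avoiding_sym rtranclp_trans)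
  then show False using neighbours_disconnected_avoiding[OF wa wb ab] by simp
qed

lemma dist_edge_neq:
  assumes ab: "E a b" and v: "v \<in> V"
  shows "dist a v \<noteq> dist b v"
proof
  assume eq: "dist a v = dist b v"
  have a: "a \<in> V" and b: "b \<in> V" using ab edge_vertices by auto
  show False
  proof (cases "dist a v")
    case 0
    then show False using dist_eq_0_iff a b v eq ab edge_irrefl by auto
  next
    case (Suc m)
    obtain a' where aa': "E a a'" and a': "dist a' v = m"
      using exists_edge_towards[OF a v] Suc by auto
    obtain b' where bb': "E b b'" and b': "dist b' v = m"
      using exists_edge_towards[OF b v] Suc eq by auto
    have "(edge_avoiding a)\<^sup>*\<^sup>* a' v" "(edge_avoiding a)\<^sup>*\<^sup>* b' v"
      using avoiding_walk_to_closer[OF a v] aa' a' bb' b' Suc edge_vertices by auto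
    moreover have "edge_avoiding a b b'"
      using bb' b' ab Suc edge_irrefl unfolding edge_avoiding_def by auto
    ultimately have "(edge_avoiding a)\<^sup>*\<^sup>* a' b"
      by (meson converse_rtranclp_into_rtranclp rtranclp_edge_avoiding_sym rtranclp_trans)
    moreover have "a' \<noteq> b" using a' eq Suc by auto
    ultimately show False using neighbours_disconnected_avoiding[OF aa' ab] by simp
  qed
qed

lemma dist_edge_cases:
  assumes ab: "E a b" and v: "v \<in> V"
  shows "dist b v = dist a v + 1 \<or> dist a v = dist b v + 1"
proof -
  have a: "a \<in> V" and b: "b \<in> V" using ab edge_vertices by auto
  have "dist a v \<le> dist a b + dist b v" "dist b v \<le> dist b a + dist a v"
    using dist_triangle a b v by auto
  then show ?thesis
    using dist_edge[OF ab] dist_edge[OF edge_sym[OF ab]] dist_edge_neq[OF ab v] by auto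
qed

text \<open>Removing the edge p p' separates the vertices closer to p from those closer to p', and
  every path between the two sides passes through this edge.\<close>
lemma dist_through_edge:
  assumes pp': "E p p'" and s: "s \<in> V" and ps: "dist p s < dist p' s"
  shows "q \<in> V \<Longrightarrow> dist p' q < dist p q \<Longrightarrow> dist s q = dist s p' + dist p' q"
proof (induction "dist p' q" arbitrary: q)
  case 0
  then show ?case using dist_eq_0_iff edge_vertices[OF pp'] by simp
next
  case (Suc m)
  note q = Suc.prems(1) and q_side = Suc.prems(2) and m = Suc.hyps(2)
  have p: "p \<in> V" and p': "p' \<in> V" using pp' edge_vertices by auto
  obtain q' where qq': "E q q'" and q'p': "dist q' p' = dist q p' - 1"
    using exists_edge_towards[OF q p'] m dist_commute by (metis zero_less_Suc)
  have q': "q' \<in> V" using qq' edge_vertices by auto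
  have m': "dist p' q' = m" using q'p' m dist_commute[of q p'] dist_commute[of q' p'] by simp
  have "dist p q = dist p' q + 1" using dist_edge_cases[OF pp' q] q_side by auto
  moreover have "dist q' p = dist q p + 1 \<or> dist q p = dist q' p + 1" by (rule dist_edge_cases[OF qq' p])
  ultimately have "dist p' q' < dist p q'"
    using m m' dist_commute[of q p] dist_commute[of q' p] by auto
  then have IH: "dist s q' = dist s p' + m" using Suc.hyps(1)[OF m'[symmetric] q'] m' by simp
  have "dist q' s \<noteq> dist q s + 1"
  proof
    assume q_closer: "dist q' s = dist q s + 1"
    show False
    proof (cases m)
      case 0
      then have "q' = p'" using m' dist_eq_0_iff q' p' by auto
      then have "q = p"
        using closer_neighbour_unique[OF p' s] qq' pp' edge_sym ps q_closer by auto
      then show False using q_side by simp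
    next
      case (Suc k)
      obtain q'' where q'q'': "E q' q''" and q''p': "dist q'' p' = dist q' p' - 1"
        using exists_edge_towards[OF q' p'] m' Suc dist_commute by (metis zero_less_Suc)
      have q'': "q'' \<in> V" using q'q'' edge_vertices by auto
      have "dist s q'' \<le> dist s p' + dist p' q''" by (rule dist_triangle[OF s p' q''])
      also have "dist p' q'' = k" using q''p' m' Suc dist_commute[of q'' p'] dist_commute[of q' p'] by simp
      finally have "dist q'' s < dist q' s" using IH Suc dist_commute by simp
      then have "q = q''"
        using closer_neighbour_unique[OF q' s] qq' edge_sym q'q'' q_closer by auto
      then show False using q''p' m m' Suc dist_commute[of q p'] dist_commute[of q' p'] by simp
    qed
  qed
  then have "dist s q = dist s q' + 1" using dist_edge_cases[OF qq' s] dist_commute by auto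
  then show ?case using IH m by simp
qed

lemma dist_four_point:
  assumes q: "q \<in> V" and s: "s \<in> V" and t: "t \<in> V"
  shows "p \<in> V \<Longrightarrow> dist p q + dist s t \<le> max (dist p s + dist q t) (dist p t + dist q s)"
proof (induction "dist p q" arbitrary: p)
  case 0
  then have "p = q" using dist_eq_0_iff q by auto
  then show ?case using dist_triangle[OF s q t] dist_commute by auto
next
  case (Suc m)
  note p = Suc.prems and m = Suc.hyps(2)
  obtain p' where pp': "E p p'" and p'q: "dist p' q = dist p q - 1"
    using exists_edge_towards[OF p q] m by (metis zero_less_Suc)
  have p': "p' \<in> V" using pp' edge_vertices by auto
  have IH: "dist p' q + dist s t \<le> max (dist p' s + dist q t) (dist p' t + dist q s)"
    using Suc.hyps(1)[of p'] p'q m p' by simp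
  have st: "dist s t \<le> dist s p + dist p t" by (rule dist_triangle[OF s p t])
  have ps: "dist p' s = dist p s + 1 \<or> dist p s = dist p' s + 1" by (rule dist_edge_cases[OF pp' s])
  have pt: "dist p' t = dist p t + 1 \<or> dist p t = dist p' t + 1" by (rule dist_edge_cases[OF pp' t])
  show ?case
  proof (cases "dist p s < dist p' s")
    case True
    have "dist s q = dist s p' + dist p' q"
      using dist_through_edge[OF pp' s True q] p'q m by simp
    then have "dist q s = dist p s + dist p q"
      using ps True p'q m dist_commute[of s q] dist_commute[of s p'] by simp
    then show ?thesis using st dist_commute[of s p] by simp
  next
    case s_side: False
    show ?thesis
    proof (cases "dist p t < dist p' t")
      case True
      have "dist t q = dist t p' + dist p' q"
        using dist_through_edge[OF pp' t True q] p'q m by simp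
      then have "dist q t = dist p t + dist p q"
        using pt True p'q m dist_commute[of t q] dist_commute[of t p'] by simp
      then show ?thesis using st dist_commute[of s p] by simp
    next
      case False
      then have "dist p s = dist p' s + 1" "dist p t = dist p' t + 1" using ps pt s_side by auto
      then show ?thesis using IH p'q m by auto
    qed
  qed
qed

lemma exists_center:
  assumes U: "U \<subseteq> V" "U \<noteq> {}"
  shows "\<exists>l\<in>U. \<exists>x\<in>V. \<forall>u\<in>U. dist u l \<le> 2 * R \<longrightarrow> dist x u \<le> R"
proof -
  obtain r where r: "r \<in> V" using vertices_nonempty by auto
  have fin: "finite ((\<lambda>u. dist u r) ` U)" using U finite_subset finite_vertices by blast
  have "Max ((\<lambda>u. dist u r) ` U) \<in> (\<lambda>u. dist u r) ` U" using Max_in[OF fin] U(2) by blast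
  then obtain l where l: "l \<in> U" and l_Max: "Max ((\<lambda>u. dist u r) ` U) = dist l r" by blast
  have l_max: "dist u r \<le> dist l r" if "u \<in> U" for u
    using Max_ge[OF fin] that l_Max by fastforce
  have l': "l \<in> V" using l U by auto
  show ?thesis
  proof (cases "dist l r \<le> R")
    case True
    then have "\<forall>u\<in>U. dist r u \<le> R" using l_max dist_commute by (metis le_trans)
    then show ?thesis using l r by blast
  next
    case False
    obtain x where x: "x \<in> V" and lx: "dist l x = R" and xr: "dist x r = dist l r - R"
      using dist_split[OF l' r, of R] False by auto
    \<comment> \<open>u is no farther from r than l, so the four-point condition bounds dist u x.\<close>
    have "dist x u \<le> R" if u: "u \<in> U" "dist u l \<le> 2 * R" for u
    proof -
      have "dist u x + dist r l \<le> max (dist u r + dist x l) (dist u l + dist x r)"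
        using dist_four_point[OF x r l'] u U by auto
      then show ?thesis using lx xr False l_max[OF u(1)] u(2) dist_commute[of r l] dist_commute[of x l]
          dist_commute[of u x] by auto
    qed
    then show ?thesis using l x by blast
  qed
qed

section \<open>Degrees\<close>

definition children :: "'a \<Rightarrow> 'a \<Rightarrow> 'a set" where
  "children r v = {u \<in> V. E v u \<and> dist r u = dist r v + 1}"

lemma finite_children: "finite (children r v)"
  using finite_vertices unfolding children_def by auto

lemma neighbours_eq_children:
  assumes r: "r \<in> V" and v: "v \<in> V"
  obtains "v = r" "{u \<in> V. E v u} = children r v"
  | p where "v \<noteq> r" "p \<notin> children r v" "{u \<in> V. E v u} = insert p (children r v)"
proof (cases "v = r")
  case True
  then show ?thesis using that(1) dist_edge unfolding children_def by auto
next
  case False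
  then have vr: "0 < dist v r" using dist_eq_0_iff v r by auto
  obtain p where vp: "E v p" and p: "dist p r = dist v r - 1"
    using exists_edge_towards[OF v r vr] .
  have "u \<in> insert p (children r v)" if u: "u \<in> V" "E v u" for u
    using dist_edge_cases[OF u(2) r] closer_neighbour_unique[OF v r u(2) vp] p vr u
      dist_commute[of r u] dist_commute[of r v] unfolding children_def by force
  moreover have "p \<notin> children r v" using p vr dist_commute[of r] unfolding children_def by auto
  moreover have "p \<in> V" using vp edge_vertices by auto
  ultimately show ?thesis using that(2)[OF False] vp unfolding children_def by blast
qed

lemma degree_children:
  assumes "r \<in> V" "v \<in> V"
  shows "degree V E v = card (children r v) + (if v = r then 0 else 1)"
  using neighbours_eq_children[OF assms] finite_children unfolding degree_def by cases auto

lemma sum_card_children: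
  assumes r: "r \<in> V"
  shows "(\<Sum>v\<in>V. card (children r v)) = card V - 1"
proof -
  have "(\<Union>v\<in>V. children r v) = V - {r}"
  proof
    show "(\<Union>v\<in>V. children r v) \<subseteq> V - {r}" unfolding children_def by auto
    show "V - {r} \<subseteq> (\<Union>v\<in>V. children r v)"
    proof
      fix u assume "u \<in> V - {r}"
      then have u: "u \<in> V" and ur: "0 < dist u r" using dist_eq_0_iff r by auto
      obtain p where up: "E u p" and p: "dist p r = dist u r - 1"
        using exists_edge_towards[OF u r ur] .
      have "u \<in> children r p"
        using u up p ur edge_sym dist_commute[of p r] dist_commute[of u r] unfolding children_def by auto
      moreover have "p \<in> V" using up edge_vertices by auto
      ultimately show "u \<in> (\<Union>v\<in>V. children r v)" by auto
    qed
  qed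
  moreover have "children r v \<inter> children r w = {}" if "v \<in> V" "w \<in> V" "v \<noteq> w" for v w
  proof -
    have "v = w" if "u \<in> children r v" "u \<in> children r w" for u
      using that closer_neighbour_unique[of u r v w] r edge_sym dist_commute
      unfolding children_def by fastforce
    then show ?thesis using \<open>v \<noteq> w\<close> by blast
  qed
  ultimately show ?thesis
    using card_UN_disjoint[OF finite_vertices, of "children r"] finite_children r finite_vertices
    by (simp add: card_Diff_singleton)
qed

lemma sum_degree: "(\<Sum>v\<in>V. degree V E v) = 2 * (card V - 1)"
proof -
  obtain r where r: "r \<in> V" using vertices_nonempty by auto
  have "(\<Sum>v\<in>V. degree V E v) = (\<Sum>v\<in>V. card (children r v)) + (\<Sum>v\<in>V. if v = r then 0 else 1)"
    using degree_children[OF r] by (simp add: sum.distrib)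
  also have "\<dots> = 2 * (card V - 1)"
    using sum_card_children[OF r] r finite_vertices by (simp add: sum.If_cases Diff_eq[symmetric])
  finally show ?thesis .
qed

lemma degree_pos:
  assumes "2 \<le> card V" and v: "v \<in> V"
  shows "0 < degree V E v"
proof -
  obtain u where u: "u \<in> V" "u \<noteq> v"
    using assms by (metis card_le_Suc0_iff_eq finite_vertices not_less_eq_eq numeral_2_eq_2)
  then have "0 < dist v u" using dist_eq_0_iff v by auto
  then obtain y where "E v y" using exists_edge_towards[OF v u(1)] by auto
  then have "y \<in> {y \<in> V. E v y}" using edge_vertices by auto
  then show ?thesis unfolding degree_def using finite_vertices by (auto simp: card_gt_0_iff)
qed

text \<open>With n_d vertices of degree d, the degree sum 2 (n - 1) gives
  n_1 = 2 + n_3 + 2 n_4 + ..., so n + n_2 - 2 (n_2 + n_3 + ...) = n_1 - n_3 - n_4 - ... \<ge> 2.\<close>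
lemma internal_vertices_bound:
  assumes "2 \<le> card V"
  shows "2 + 2 * card {v \<in> V. 2 \<le> degree V E v} \<le> card V + card {v \<in> V. degree V E v = 2}"
proof -
  let ?w = "\<lambda>v. 1 + (if degree V E v = 2 then 1 else 0) - 2 * (if 2 \<le> degree V E v then 1 else 0) :: int"
  have count: "int (card {v \<in> V. P v}) = (\<Sum>v\<in>V. if P v then 1 else 0)" for P
    using sum.inter_filter[OF finite_vertices, of "\<lambda>_. 1 :: int" P] by simp
  have "int (card V) + int (card {v \<in> V. degree V E v = 2}) - 2 * int (card {v \<in> V. 2 \<le> degree V E v})
      = (\<Sum>v\<in>V. ?w v)"
    by (simp add: count sum.distrib sum_subtractf sum_distrib_left)
  also have "\<dots> \<ge> (\<Sum>v\<in>V. 2 - int (degree V E v))"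
    by (intro sum_mono) (auto dest!: degree_pos[OF assms])
  also have "(\<Sum>v\<in>V. 2 - int (degree V E v)) = 2"
    using sum_degree assms by (simp add: sum_subtractf of_nat_sum[symmetric])
  finally show ?thesis by linarith
qed

section \<open>Packing and covering\<close>

text \<open>The i-th point of a scattered list (counted from 0) is at distance at least
  2 (length - i) - 3 from every later point.\<close>
fun scattered :: "'a list \<Rightarrow> bool" where
  "scattered [] \<longleftrightarrow> True"
| "scattered (l # ls) \<longleftrightarrow> l \<in> V \<and> scattered ls \<and> (\<forall>y\<in>set ls. 2 * length ls - 1 \<le> dist l y)"

lemma scattered_subset: "scattered ls \<Longrightarrow> set ls \<subseteq> V"
  by (induction ls) auto

definition far_internal :: "nat \<Rightarrow> 'a set \<Rightarrow> 'a set" where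
  "far_internal K L = {v \<in> V. 2 \<le> degree V E v \<and> (\<forall>l\<in>L. K \<le> dist l v)}"

lemma geodesic_points:
  assumes a: "a \<in> V" and b: "b \<in> V"
  obtains f where "\<And>s. s \<le> dist a b \<Longrightarrow> f s \<in> V \<and> dist a (f s) = s \<and> dist (f s) b = dist a b - s"
proof -
  have "\<forall>s. \<exists>y. s \<le> dist a b \<longrightarrow> y \<in> V \<and> dist a y = s \<and> dist y b = dist a b - s"
    using dist_split[OF a b] by metis
  then show ?thesis using that by metis
qed

lemma interior_degree:
  assumes a: "a \<in> V" and b: "b \<in> V" and y: "y \<in> V"
    and ay: "dist a y = s" and yb: "dist y b = dist a b - s" and "0 < s" "s < dist a b"
  shows "2 \<le> degree V E y"
proof -
  obtain z1 where yz1: "E y z1" and z1: "dist z1 a = dist y a - 1"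
    using exists_edge_towards[OF y a] ay assms(6) dist_commute by (metis gr0I)
  obtain z2 where yz2: "E y z2" and z2: "dist z2 b = dist y b - 1"
    using exists_edge_towards[OF y b] yb assms(7) by (metis zero_less_diff)
  have z2': "z2 \<in> V" using yz2 edge_vertices by auto
  have "dist a b \<le> dist a z2 + dist z2 b" by (rule dist_triangle[OF a z2' b])
  then have "s + 1 \<le> dist a z2" using z2 yb assms(7) by simp
  moreover have "dist a z1 = s - 1" using z1 ay dist_commute[of z1 a] dist_commute[of y a] by simp
  ultimately have "z1 \<noteq> z2" using assms(6) by auto
  have "{z1, z2} \<subseteq> {u \<in> V. E y u}" using yz1 yz2 edge_vertices by auto
  then have "card {z1, z2} \<le> card {u \<in> V. E y u}" using finite_vertices by (intro card_mono) auto
  with \<open>z1 \<noteq> z2\<close> show ?thesis unfolding degree_def by simp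
qed

text \<open>Let b be the point of ls nearest to a. The vertices on the geodesic from a to b at
  distances 1, ..., K and dist a b - K from a are internal, at distance at least K from ls,
  and at distance at most K from a or b.\<close>
lemma geodesic_internal_vertices:
  assumes K: "1 \<le> K" and len: "length ls = K + 1" and sc: "scattered (a # ls)"
  obtains N where "card N = Suc K" "N \<subseteq> far_internal K (set ls)"
    "N \<inter> far_internal (Suc K) (set (a # ls)) = {}"
proof -
  have a: "a \<in> V" and ls: "set ls \<subseteq> V" and far: "\<And>l. l \<in> set ls \<Longrightarrow> 2 * K + 1 \<le> dist a l"
    using sc len scattered_subset by auto
  have ne: "set ls \<noteq> {}" using len by auto
  define b where "b = arg_min_on (dist a) (set ls)"
  have b: "b \<in> set ls" using arg_min_if_finite(1)[OF finite_set ne] unfolding b_def .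
  have b_min: "dist a b \<le> dist a l" if "l \<in> set ls" for l
    using arg_min_least[OF finite_set ne that] unfolding b_def .
  define D where "D = dist a b"
  have b': "b \<in> V" and D: "2 * K + 1 \<le> D" using b ls far unfolding D_def by auto
  obtain f where f: "\<And>s. s \<le> D \<Longrightarrow> f s \<in> V \<and> dist a (f s) = s \<and> dist (f s) b = D - s"
    using geodesic_points[OF a b'] unfolding D_def by blast
  define I where "I = {1..K} \<union> {D - K}"
  have I: "0 < s \<and> s < D" if "s \<in> I" for s using that D K unfolding I_def by auto
  have f_I: "f s \<in> V \<and> dist a (f s) = s \<and> dist (f s) b = D - s" if "s \<in> I" for s
    using f[of s] I[OF that] by simp
  have "inj_on f I" by (rule inj_onI) (metis f_I)
  moreover have "D - K \<notin> {1..K}" using D by auto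
  then have "card I = Suc K" unfolding I_def by simp
  ultimately have card_N: "card (f ` I) = Suc K" by (simp add: card_image)
  have N_far: "f ` I \<subseteq> far_internal K (set ls)"
  proof
    fix y assume "y \<in> f ` I"
    then obtain s where s: "s \<in> I" and y: "y = f s" by auto
    have "2 \<le> degree V E y" using interior_degree[OF a b'] f_I[OF s] I[OF s] y unfolding D_def by auto
    moreover have "K \<le> dist l y" if l: "l \<in> set ls" for l
    proof -
      have "dist a l \<le> dist a y + dist y l"
        by (rule dist_triangle) (use a f_I[OF s] y l ls in auto)
      then show ?thesis
        using s far[OF l] b_min[OF l] f_I[OF s] y D dist_commute[of y l] unfolding I_def D_def by auto
    qed
    ultimately show "y \<in> far_internal K (set ls)" unfolding far_internal_def using f_I[OF s] y by auto
  qed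
  have N_near: "f ` I \<inter> far_internal (Suc K) (set (a # ls)) = {}"
  proof -
    have "dist a (f s) \<le> K \<or> dist b (f s) \<le> K" if "s \<in> I" for s
      using that f_I[OF that] D dist_commute[of b] unfolding I_def by auto
    then show ?thesis using b unfolding far_internal_def by force
  qed
  show ?thesis using that card_N N_far N_near by blast
qed

lemma card_far_internal_Cons:
  assumes "1 \<le> K" and "length ls = K + 1" and "scattered (a # ls)"
  shows "card (far_internal (Suc K) (set (a # ls))) + Suc K \<le> card (far_internal K (set ls))"
proof -
  obtain N where card_N: "card N = Suc K" and N_far: "N \<subseteq> far_internal K (set ls)"
    and N_near: "N \<inter> far_internal (Suc K) (set (a # ls)) = {}"
    by (rule geodesic_internal_vertices[OF assms])
  have fin: "finite (far_internal K (set ls))" using finite_vertices unfolding far_internal_def by simp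
  have "far_internal (Suc K) (set (a # ls)) \<subseteq> far_internal K (set ls)"
    unfolding far_internal_def by auto
  then have "card (far_internal (Suc K) (set (a # ls)) \<union> N) \<le> card (far_internal K (set ls))"
    using N_far fin by (intro card_mono) auto
  moreover have "card (far_internal (Suc K) (set (a # ls)) \<union> N)
      = card (far_internal (Suc K) (set (a # ls))) + card N"
    using N_near N_far \<open>far_internal (Suc K) (set (a # ls)) \<subseteq> far_internal K (set ls)\<close> fin
    by (intro card_Un_disjoint) (auto intro: finite_subset)
  ultimately show ?thesis using card_N by simp
qed

lemma packing_bound:
  assumes "1 \<le> K" and "length ls = K + 1" and "scattered ls"
  shows "K * K + K + 2 * card (far_internal K (set ls)) \<le> card V + card {v \<in> V. degree V E v = 2}"
  using assms
proof (induction K arbitrary: ls rule: nat_induct_at_least)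
  case base
  then obtain a b where ls: "ls = [a, b]" by (auto simp: length_Suc_conv)
  then have "a \<noteq> b" "a \<in> V" "b \<in> V" using base by auto
  then have "card {a, b} \<le> card V" using finite_vertices by (intro card_mono) auto
  with \<open>a \<noteq> b\<close> have "2 \<le> card V" by simp
  moreover have "far_internal 1 (set ls) \<subseteq> {v \<in> V. 2 \<le> degree V E v}"
    unfolding far_internal_def by auto
  then have "card (far_internal 1 (set ls)) \<le> card {v \<in> V. 2 \<le> degree V E v}"
    using finite_vertices by (intro card_mono) auto
  ultimately show ?case using internal_vertices_bound by fastforce
next
  case (Suc K)
  then obtain a ls' where ls: "ls = a # ls'" and len: "length ls' = K + 1"
    by (cases ls) auto
  have "scattered ls'" using Suc.prems ls by simp
  then have "K * K + K + 2 * card (far_internal K (set ls'))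
      \<le> card V + card {v \<in> V. degree V E v = 2}"
    using Suc.IH len by blast
  moreover have "card (far_internal (Suc K) (set ls)) + Suc K \<le> card (far_internal K (set ls'))"
    using card_far_internal_Cons[OF Suc.hyps len] Suc.prems ls by simp
  ultimately show ?case by simp
qed

text \<open>The ball around cs ! i is what a fire lit at cs ! i in round i + 1 reaches by
  round length cs.\<close>
definition covered_by_balls :: "'a list \<Rightarrow> 'a set \<Rightarrow> bool" where
  "covered_by_balls cs U \<longleftrightarrow> (\<forall>u\<in>U. \<exists>i<length cs. dist (cs ! i) u \<le> length cs - 1 - i)"

lemma covered_by_balls_Cons:
  assumes "covered_by_balls cs {u \<in> U. length cs < dist x u}"
  shows "covered_by_balls (x # cs) U"
  unfolding covered_by_balls_def
proof
  fix u assume u: "u \<in> U"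
  show "\<exists>i<length (x # cs). dist ((x # cs) ! i) u \<le> length (x # cs) - 1 - i"
  proof (cases "dist x u \<le> length cs")
    case True
    then show ?thesis by (intro exI[of _ 0]) auto
  next
    case False
    then obtain i where "i < length cs" "dist (cs ! i) u \<le> length cs - 1 - i"
      using assms u unfolding covered_by_balls_def by auto
    then show ?thesis by (intro exI[of _ "Suc i"]) auto
  qed
qed

lemma cover_or_scattered:
  "U \<subseteq> V \<Longrightarrow> (\<exists>cs. length cs = N \<and> set cs \<subseteq> V \<and> covered_by_balls cs U)
     \<or> (\<exists>ls. length ls = N + 1 \<and> set ls \<subseteq> U \<and> scattered ls)"
proof (induction N arbitrary: U)
  case 0
  show ?case
  proof (cases "U = {}")
    case True
    then show ?thesis by (intro disjI1 exI[of _ "[]"]) (simp add: covered_by_balls_def)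
  next
    case False
    then obtain u where "u \<in> U" by auto
    then show ?thesis using 0 by (intro disjI2 exI[of _ "[u]"]) auto
  qed
next
  case (Suc N)
  show ?case
  proof (cases "U = {}")
    case True
    obtain r where "r \<in> V" using vertices_nonempty by auto
    then show ?thesis using True
      by (intro disjI1 exI[of _ "replicate (Suc N) r"]) (auto simp: covered_by_balls_def)
  next
    case False
    obtain l x where l: "l \<in> U" and x: "x \<in> V" and lx: "\<forall>u\<in>U. dist u l \<le> 2 * N \<longrightarrow> dist x u \<le> N"
      using exists_center[OF Suc.prems False] by blast
    define U' where "U' = {u \<in> U. N < dist x u}"
    have U': "U' \<subseteq> V" using Suc.prems unfolding U'_def by auto
    from Suc.IH[OF U'] show ?thesis
    proof (elim disjE exE conjE)
      fix cs assume cs: "length cs = N" "set cs \<subseteq> V" "covered_by_balls cs U'"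
      then have "covered_by_balls (x # cs) U" unfolding U'_def by (intro covered_by_balls_Cons) simp
      then show ?thesis using cs x by (intro disjI1 exI[of _ "x # cs"]) auto
    next
      fix ls assume ls: "length ls = N + 1" "set ls \<subseteq> U'" "scattered ls"
      have "2 * N + 1 \<le> dist l u" if "u \<in> U'" for u
        using that lx dist_commute[of u l] unfolding U'_def by force
      then have "scattered (l # ls)" using ls l Suc.prems by auto
      then show ?thesis using ls l unfolding U'_def by (intro disjI2 exI[of _ "l # ls"]) auto
    qed
  qed
qed

lemma burning_number_le_cover:
  assumes cs: "set cs \<subseteq> V" and cover: "covered_by_balls cs V"
  shows "burning_number V E \<le> length cs"
proof (rule burning_number_le[OF _ cs])
  show "v \<in> V" if "E u v" for u v using edge_vertices[OF that] by simp
  show "V \<subseteq> burned E cs (length cs)"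
  proof
    fix v assume v: "v \<in> V"
    then obtain i where i: "i < length cs" "dist (cs ! i) v \<le> length cs - 1 - i"
      using cover unfolding covered_by_balls_def by blast
    have "cs ! i \<in> burned E cs (Suc i)" by simp
    moreover have "(E ^^ dist (cs ! i) v) (cs ! i) v"
      using dist_relpowp cs i(1) v by (simp add: subset_iff)
    ultimately have "v \<in> burned E cs (Suc i + dist (cs ! i) v)" by (rule burned_relpowp)
    moreover have "Suc i + dist (cs ! i) v \<le> length cs" using i by simp
    ultimately show "v \<in> burned E cs (length cs)" using burned_mono[of _ "length cs" E cs] by blast
  qed
qed

end

lemma sqrt_offset_bounds:
  fixes m :: nat
  assumes "1 \<le> m"
  defines "c \<equiv> \<lceil>sqrt (real m + 0.25) - 1.5\<rceil>"
  shows "0 \<le> c" and "c * c + c < int m"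
proof -
  have "1 < sqrt (real m + 0.25)" using assms(1) by (intro real_less_rsqrt) simp
  moreover have "sqrt (real m + 0.25) - 1.5 \<le> of_int c" unfolding c_def by (rule le_of_int_ceiling)
  ultimately show c: "0 \<le> c" by linarith
  have "of_int c - 1 < sqrt (real m + 0.25) - 1.5"
    unfolding c_def using ceiling_correct by blast
  then have "of_int c + 0.5 < sqrt (real m + 0.25)" by simp
  moreover have "0 \<le> of_int c + (0.5 :: real)" using c by simp
  ultimately have "(of_int c + 0.5)\<^sup>2 < real m + 0.25"
    using real_le_lsqrt[of "of_int c + 0.5" "real m + 0.25"] by linarith
  then have "real_of_int (c * c + c) < real m" by (simp add: power2_eq_square algebra_simps)
  then show "c * c + c < int m" by linarith
qed

lemma ceiling_sqrt_bound:
  fixes m :: nat and c :: int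
  assumes c: "0 \<le> c" and m: "c * c + c < int m"
  defines "k \<equiv> \<lceil>sqrt (real m - of_int c)\<rceil>"
  shows "c < k" and "int m < k * k + k"
proof -
  have k: "sqrt (real m - of_int c) \<le> of_int k" unfolding k_def by (rule le_of_int_ceiling)
  have "real_of_int (c * c + c) < of_int (int m)" using m by (simp only: of_int_less_iff)
  then have "(of_int c)\<^sup>2 < real m - of_int c" by (simp add: power2_eq_square)
  then have "of_int c < sqrt (real m - of_int c)" by (rule real_less_rsqrt)
  then show "c < k" using k by linarith
  then have "real m - of_int c \<le> (of_int k)\<^sup>2" using k c by (intro sqrt_le_D) 
  then have "real m \<le> of_int (k * k + c)" by (simp add: power2_eq_square)
  then have "int m \<le> k * k + c" by linarith
  with \<open>c < k\<close> show "int m < k * k + k" by simp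
qed

theorem theorem3:
  fixes V :: "'a set" and E :: "'a \<Rightarrow> 'a \<Rightarrow> bool" and n n2 :: nat
  assumes "tree V E"
    and "n = card V"
    and "n2 = card {v \<in> V. degree V E v = 2}"
  shows "real (burning_number V E)
         \<le> of_int \<lceil>sqrt (real (n + n2) - of_int \<lceil>sqrt (real (n + n2) + 0.25) - 1.5\<rceil>)\<rceil>"
proof -
  interpret tree_graph V E by (rule tree_graph.intro) (fact assms(1))
  have "1 \<le> n + n2" using assms(2) finite_vertices vertices_nonempty by (simp add: Suc_le_eq card_gt_0_iff)
  define c where "c = \<lceil>sqrt (real (n + n2) + 0.25) - 1.5\<rceil>"
  define k where "k = \<lceil>sqrt (real (n + n2) - of_int c)\<rceil>"
  have c: "0 \<le> c" and cm: "c * c + c < int (n + n2)"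
    unfolding c_def by (fact sqrt_offset_bounds[OF \<open>1 \<le> n + n2\<close>])+
  have "c < k" "int (n + n2) < k * k + k"
    unfolding k_def by (fact ceiling_sqrt_bound[OF c cm])+
  define K where "K = nat k"
  have k: "k = int K" and K1: "1 \<le> K" using c \<open>c < k\<close> unfolding K_def by auto
  have "int (n + n2) < int (K * K + K)" using \<open>int (n + n2) < k * k + k\<close> k by simp
  then have K: "n + n2 < K * K + K" by (simp only: of_nat_less_iff)
  from cover_or_scattered[OF order_refl, of K] have "burning_number V E \<le> K"
  proof (elim disjE exE conjE)
    fix cs assume "length cs = K" "set cs \<subseteq> V" "covered_by_balls cs V"
    then show ?thesis using burning_number_le_cover by auto
  next
    fix ls assume "length ls = K + 1" "set ls \<subseteq> V" "scattered ls"
    then have "K * K + K \<le> n + n2" using packing_bound[OF K1] assms(2,3) by (meson le_add1 le_trans)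
    then show ?thesis using K by simp
  qed
  then show ?thesis using k unfolding k_def c_def by simp
qed

end
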